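(* There is an absolute constant $c$ such that for every instance of $P_n\,|\,\mathrm{conc}, p_j\le p\,|\,*$ with conflict graph $G$ on $n\ge 2$ jobs, there exists a feasible minimal schedule $C$ with $C_{\max}=\max_j C_j\le c\cdot tw(G)\cdot p\log n$ (i.e. $C_{\max}=O(tw(G)\cdot p\log n)$).
   Context: In $P_n\,|\,\mathrm{conc}, p_j\le p\,|\,*$, jobs $\{1,\dots,n\}$ have integer processing times $1\le p_j\le p$ and release time $0$; there is a conflict graph $G=(\{1,\dots,n\},E)$. A schedule $C:\{1,\dots,n\}\to\mathbb{N}$ is feasible if $C_j-p_j\ge 0$ for all $j$ and $[C_i-p_i,C_i)\cap[C_j-p_j,C_j)=\emptyset$ for all $\{i,j\}\in E$. A feasible schedule is minimal if decreasing the completion time of any job by any positive amount makes it infeasible. $tw(G)$ is the treewidth of $G$. *)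

theory Defs
  imports Complex_Main
begin

definition simple_graph :: "'a set \<Rightarrow> 'a set set \<Rightarrow> bool" where
  "simple_graph V E \<longleftrightarrow> finite V \<and>
     E \<subseteq> {{a, b} | a b. a \<in> V \<and> b \<in> V \<and> a \<noteq> b}"

definition graph_connected :: "'a set \<Rightarrow> 'a set set \<Rightarrow> bool" where
  "graph_connected V E \<longleftrightarrow>
     (\<forall>x\<in>V. \<forall>y\<in>V. (x, y) \<in> {(a, b). {a, b} \<in> E \<and> a \<in> V \<and> b \<in> V}\<^sup>*)"

definition is_tree :: "'a set \<Rightarrow> 'a set set \<Rightarrow> bool" where
  "is_tree N TE \<longleftrightarrow> N \<noteq> {} \<and> simple_graph N TE \<and> graph_connected N TE \<and>
     (\<forall>e\<in>TE. \<not> graph_connected N (TE - {e}))"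

definition tree_decomposition ::
  "'a set \<Rightarrow> 'a set set \<Rightarrow> nat set \<Rightarrow> nat set set \<Rightarrow> (nat \<Rightarrow> 'a set) \<Rightarrow> bool" where
  "tree_decomposition V E N TE B \<longleftrightarrow>
     is_tree N TE \<and>
     (\<forall>t\<in>N. B t \<subseteq> V) \<and>
     (\<forall>v\<in>V. \<exists>t\<in>N. v \<in> B t) \<and>
     (\<forall>e\<in>E. \<exists>t\<in>N. e \<subseteq> B t) \<and>
     (\<forall>v\<in>V. graph_connected {t\<in>N. v \<in> B t} {e\<in>TE. \<forall>t\<in>e. v \<in> B t})"

definition decomposition_width :: "nat set \<Rightarrow> (nat \<Rightarrow> 'a set) \<Rightarrow> nat" where
  "decomposition_width N B = Max (card ` B ` N) - 1"

definition treewidth :: "'a set \<Rightarrow> 'a set set \<Rightarrow> nat" where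
  "treewidth V E = (LEAST w. \<exists>N TE B. tree_decomposition V E N TE B \<and>
                                      w = decomposition_width N B)"

definition feasible_schedule ::
  "nat \<Rightarrow> (nat \<Rightarrow> nat) \<Rightarrow> nat set set \<Rightarrow> (nat \<Rightarrow> nat) \<Rightarrow> bool" where
  "feasible_schedule n pt E C \<longleftrightarrow>
     (\<forall>j\<in>{1..n}. pt j \<le> C j) \<and>
     (\<forall>i j. {i, j} \<in> E \<longrightarrow> {C i - pt i ..< C i} \<inter> {C j - pt j ..< C j} = {})"

text \<open>Minimal: decreasing the completion time of any job by any positive amount
  (staying in the naturals; otherwise infeasible trivially) gives an infeasible schedule.\<close>
definition minimal_schedule ::
  "nat \<Rightarrow> (nat \<Rightarrow> nat) \<Rightarrow> nat set set \<Rightarrow> (nat \<Rightarrow> nat) \<Rightarrow> bool" where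
  "minimal_schedule n pt E C \<longleftrightarrow> feasible_schedule n pt E C \<and>
     (\<forall>j\<in>{1..n}. \<forall>d. 0 < d \<and> d \<le> C j \<longrightarrow>
        \<not> feasible_schedule n pt E (C(j := C j - d)))"

definition makespan :: "nat \<Rightarrow> (nat \<Rightarrow> nat) \<Rightarrow> nat" where
  "makespan n C = Max (C ` {1..n})"

end

theory Submission
  imports Defs
begin

text \<open>A graph of treewidth \<open>k\<close> is \<open>k\<close>-degenerate: take a leaf \<open>t\<close> of a tree decomposition with
  neighbour \<open>t'\<close>; either the bag of \<open>t\<close> is contained in that of \<open>t'\<close> and \<open>t\<close> can be deleted, or
  some vertex occurs only in the bag of \<open>t\<close>, and then all its neighbours lie in that bag of size
  at most \<open>k + 1\<close>. Scheduling the jobs in reverse degeneracy order, each one completing at the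
  earliest time at which it overlaps none of its at most \<open>k\<close> already scheduled neighbours, gives
  a schedule in which no job can be moved earlier, hence a minimal one. Each neighbour rules out
  fewer than \<open>2p\<close> completion times, so the makespan is at most \<open>(2k + 1) p\<close>.\<close>

definition adj_rel :: "'a set \<Rightarrow> 'a set set \<Rightarrow> ('a \<times> 'a) set" where
  "adj_rel V F = {(a, b). {a, b} \<in> F \<and> a \<in> V \<and> b \<in> V}"

lemma graph_connected_iff_adj_rel:
  "graph_connected V F \<longleftrightarrow> (\<forall>x\<in>V. \<forall>y\<in>V. (x, y) \<in> (adj_rel V F)\<^sup>*)"
  by (simp add: graph_connected_def adj_rel_def)

lemma converse_adj_rel: "(adj_rel V F)\<inverse> = adj_rel V F"
  by (auto simp: adj_rel_def insert_commute)

lemma adj_rel_rtrancl_sym: "(a, b) \<in> (adj_rel V F)\<^sup>* \<Longrightarrow> (b, a) \<in> (adj_rel V F)\<^sup>*"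
  using rtrancl_converseI[of a b "adj_rel V F"] by (simp add: converse_adj_rel)

lemma adj_rel_rtrancl_in: "(a, b) \<in> (adj_rel V F)\<^sup>* \<Longrightarrow> a \<in> V \<Longrightarrow> b \<in> V"
  by (induction rule: rtrancl_induct) (auto simp: adj_rel_def)

lemma simple_graph_edgeD: "simple_graph V E \<Longrightarrow> {x, y} \<in> E \<Longrightarrow> x \<in> V \<and> y \<in> V \<and> x \<noteq> y"
  unfolding simple_graph_def by (auto simp: doubleton_eq_iff)

lemma simple_graph_no_loop: "simple_graph V E \<Longrightarrow> {v} \<notin> E"
  by (metis insert_absorb2 simple_graph_edgeD)

lemma graph_connected_remove_cycle_edge:
  assumes "graph_connected V F" "{x, y} \<in> F" "(y, x) \<in> (adj_rel V (F - {{x, y}}))\<^sup>*"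
  shows "graph_connected V (F - {{x, y}})"
proof -
  let ?R = "adj_rel V (F - {{x, y}})"
  have "adj_rel V F \<subseteq> ?R\<^sup>*"
  proof
    fix q assume "q \<in> adj_rel V F"
    then obtain a b where q: "q = (a, b)" "{a, b} \<in> F" "a \<in> V" "b \<in> V"
      by (auto simp: adj_rel_def)
    show "q \<in> ?R\<^sup>*"
    proof (cases "{a, b} = {x, y}")
      case True
      then show ?thesis
        using q(1) assms(3) adj_rel_rtrancl_sym[OF assms(3)] by (auto simp: doubleton_eq_iff)
    next
      case False
      then show ?thesis using q by (auto simp: adj_rel_def)
    qed
  qed
  then have "(adj_rel V F)\<^sup>* \<subseteq> ?R\<^sup>*"
    by (metis rtrancl_subset_rtrancl)
  then show ?thesis
    using assms(1) by (auto simp: graph_connected_iff_adj_rel)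
qed

text \<open>A walk through the removed vertex \<open>t\<close> enters and leaves it via \<open>t'\<close>, so it can be
  rerouted by replacing every visit of \<open>t\<close> by \<open>t'\<close>.\<close>
lemma graph_connected_remove_leaf:
  assumes "graph_connected M F" "t' \<noteq> t" "\<forall>w. {t, w} \<in> F \<longrightarrow> w = t'"
  shows "graph_connected (M - {t}) (F - {{t, t'}})"
proof -
  let ?R' = "adj_rel (M - {t}) (F - {{t, t'}})"
  have reroute: "(x, if y = t then t' else y) \<in> ?R'\<^sup>*"
    if "(x, y) \<in> (adj_rel M F)\<^sup>*" "x \<in> M" "x \<noteq> t" for x y
    using that(1)
  proof (induction rule: rtrancl_induct)
    case base
    then show ?case using that by auto
  next
    case (step z y)
    then have zy: "{z, y} \<in> F" "z \<in> M" "y \<in> M"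
      by (auto simp: adj_rel_def)
    consider "y = t" | "z = t" | "y \<noteq> t" "z \<noteq> t"
      by blast
    then show ?case
    proof cases
      case 1
      then have "z = t'" using zy assms(3) by (auto simp: insert_commute)
      then show ?thesis using step.IH 1 assms(2) by auto
    next
      case 2
      then have "y = t'" using zy assms(3) by auto
      then show ?thesis using step.IH 2 assms(2) by auto
    next
      case 3
      then have "(z, y) \<in> ?R'" using zy by (auto simp: adj_rel_def doubleton_eq_iff)
      then show ?thesis using step.IH 3 by (auto intro: rtrancl_into_rtrancl)
    qed
  qed
  show ?thesis
    unfolding graph_connected_iff_adj_rel
  proof (intro ballI)
    fix x y assume "x \<in> M - {t}" "y \<in> M - {t}"
    moreover from this have "(x, y) \<in> (adj_rel M F)\<^sup>*"
      using assms(1) by (simp add: graph_connected_iff_adj_rel)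
    ultimately show "(x, y) \<in> ?R'\<^sup>*"
      using reroute[of x y] by auto
  qed
qed

lemma graph_connected_add_leaf:
  assumes "graph_connected M F" "t' \<in> M"
  shows "graph_connected (insert t M) (insert {t, t'} F)"
proof -
  let ?R' = "adj_rel (insert t M) (insert {t, t'} F)"
  have "(adj_rel M F)\<^sup>* \<subseteq> ?R'\<^sup>*"
    by (rule rtrancl_mono) (auto simp: adj_rel_def)
  then have old: "(x, y) \<in> ?R'\<^sup>*" if "x \<in> M" "y \<in> M" for x y
    using that assms(1) by (auto simp: graph_connected_iff_adj_rel)
  have tt': "(t, t') \<in> ?R'\<^sup>*" and t't: "(t', t) \<in> ?R'\<^sup>*"
    using assms(2) by (auto simp: adj_rel_def insert_commute)
  have "(x, y) \<in> ?R'\<^sup>*" if x: "x \<in> insert t M" and y: "y \<in> insert t M" for x y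
  proof -
    consider "x = t" "y = t" | "x = t" "y \<in> M" | "x \<in> M" "y = t" | "x \<in> M" "y \<in> M"
      using x y by blast
    then show ?thesis
    proof cases
      case 2
      then show ?thesis using rtrancl_trans[OF tt' old[OF assms(2)]] by simp
    next
      case 3
      then show ?thesis using rtrancl_trans[OF old[OF _ assms(2)] t't] by simp
    qed (simp_all add: old)
  qed
  then show ?thesis
    unfolding graph_connected_iff_adj_rel by blast
qed

definition leaf_edge :: "'a set set \<Rightarrow> 'a \<Rightarrow> 'a \<Rightarrow> bool" where
  "leaf_edge TE t t' \<longleftrightarrow> {t, t'} \<in> TE \<and> (\<forall>w. {t, w} \<in> TE \<longrightarrow> w = t')"

lemma is_tree_remove_leaf:
  assumes tree: "is_tree N TE" and leaf: "leaf_edge TE t t'"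
  shows "is_tree (N - {t}) (TE - {{t, t'}})"
proof -
  have sg: "simple_graph N TE" and conn: "graph_connected N TE"
    and min: "\<forall>e\<in>TE. \<not> graph_connected N (TE - {e})"
    using tree by (auto simp: is_tree_def)
  have t: "t \<in> N" "t' \<in> N" "t \<noteq> t'" and only_t': "\<forall>w. {t, w} \<in> TE \<longrightarrow> w = t'"
    using leaf simple_graph_edgeD[OF sg] by (auto simp: leaf_edge_def)
  have "simple_graph (N - {t}) (TE - {{t, t'}})"
    unfolding simple_graph_def
  proof (intro conjI subsetI)
    show "finite (N - {t})"
      using sg by (simp add: simple_graph_def)
    fix e assume e: "e \<in> TE - {{t, t'}}"
    then obtain a b where ab: "e = {a, b}" "a \<in> N" "b \<in> N" "a \<noteq> b"
      using sg unfolding simple_graph_def by blast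
    moreover have "a \<noteq> t" "b \<noteq> t"
      using e ab only_t' by (auto simp: insert_commute)
    ultimately show "e \<in> {{a, b} |a b. a \<in> N - {t} \<and> b \<in> N - {t} \<and> a \<noteq> b}"
      by blast
  qed
  moreover have "graph_connected (N - {t}) (TE - {{t, t'}})"
    using graph_connected_remove_leaf[OF conn] t(3) only_t' by auto
  moreover have "\<not> graph_connected (N - {t}) (TE - {{t, t'}} - {e})" if e: "e \<in> TE - {{t, t'}}" for e
  proof
    assume "graph_connected (N - {t}) (TE - {{t, t'}} - {e})"
    then have "graph_connected (insert t (N - {t})) (insert {t, t'} (TE - {{t, t'}} - {e}))"
      using t by (intro graph_connected_add_leaf) auto
    moreover have "insert t (N - {t}) = N" "insert {t, t'} (TE - {{t, t'}} - {e}) = TE - {e}"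
      using e t leaf by (auto simp: leaf_edge_def)
    ultimately show False
      using min e by auto
  qed
  ultimately show ?thesis
    using t unfolding is_tree_def by blast
qed

definition tree_side :: "'a set \<Rightarrow> 'a set set \<Rightarrow> 'a \<Rightarrow> 'a \<Rightarrow> 'a set" where
  "tree_side N TE x y = {z. (y, z) \<in> (adj_rel N (TE - {{x, y}}))\<^sup>*}"

lemma tree_side_not_in:
  assumes "is_tree N TE" "{x, y} \<in> TE"
  shows "x \<notin> tree_side N TE x y"
proof
  assume "x \<in> tree_side N TE x y"
  then have "graph_connected N (TE - {{x, y}})"
    using assms by (intro graph_connected_remove_cycle_edge) (auto simp: is_tree_def tree_side_def)
  then show False
    using assms by (auto simp: is_tree_def)
qed

lemma finite_tree_side: "is_tree N TE \<Longrightarrow> y \<in> N \<Longrightarrow> finite (tree_side N TE x y)"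
  by (rule finite_subset[of _ N])
    (auto simp: is_tree_def simple_graph_def tree_side_def dest: adj_rel_rtrancl_in)

text \<open>Walks from \<open>w\<close> avoiding the edge \<open>{y, w}\<close> never reach \<open>y\<close> (the tree has no cycle), so they
  also avoid \<open>{x, y}\<close>; and \<open>y\<close> itself is on \<open>y\<close>'s side of \<open>{x, y}\<close> but not on \<open>w\<close>'s side of \<open>{y, w}\<close>.\<close>
lemma tree_side_psubset:
  assumes tree: "is_tree N TE" and xy: "{x, y} \<in> TE" and yw: "{y, w} \<in> TE" and "w \<noteq> x"
  shows "tree_side N TE y w \<subset> tree_side N TE x y"
proof -
  have sg: "simple_graph N TE"
    using tree by (simp add: is_tree_def)
  have y_notin: "y \<notin> tree_side N TE y w"
    using tree_side_not_in[OF tree yw] .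
  let ?R1 = "adj_rel N (TE - {{y, w}})" and ?R2 = "adj_rel N (TE - {{x, y}})"
  have "(w, z) \<in> ?R2\<^sup>*" if "(w, z) \<in> ?R1\<^sup>*" for z
    using that
  proof (induction rule: rtrancl_induct)
    case (step z z')
    have "z \<noteq> y" "z' \<noteq> y"
      using step.hyps y_notin by (auto simp: tree_side_def intro: rtrancl_into_rtrancl)
    then have "(z, z') \<in> ?R2"
      using step.hyps(2) by (auto simp: adj_rel_def doubleton_eq_iff)
    with step.IH show ?case
      by (rule rtrancl_into_rtrancl)
  qed simp
  moreover have "(y, w) \<in> ?R2"
    using simple_graph_edgeD[OF sg yw] yw \<open>w \<noteq> x\<close> by (auto simp: adj_rel_def doubleton_eq_iff)
  ultimately have "tree_side N TE y w \<subseteq> tree_side N TE x y"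
    by (auto simp: tree_side_def intro: converse_rtrancl_into_rtrancl)
  moreover have "y \<in> tree_side N TE x y"
    by (simp add: tree_side_def)
  ultimately show ?thesis
    using y_notin by blast
qed

text \<open>An edge \<open>{x, y}\<close> minimising the size of \<open>y\<close>'s side has \<open>y\<close> as a leaf, since any other
  neighbour \<open>w\<close> of \<open>y\<close> would give a smaller side.\<close>
lemma tree_has_leaf_edge:
  assumes tree: "is_tree N TE" and "2 \<le> card N"
  shows "\<exists>t t'. leaf_edge TE t t'"
proof -
  have fin: "finite N" and sg: "simple_graph N TE"
    using tree by (auto simp: is_tree_def simple_graph_def)
  have "\<not> card N \<le> Suc 0"
    using assms(2) by simp
  then obtain a b where ab: "a \<in> N" "b \<in> N" "a \<noteq> b"
    using card_le_Suc0_iff_eq[OF fin] by blast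
  then have "(a, b) \<in> (adj_rel N TE)\<^sup>*"
    using tree by (auto simp: is_tree_def graph_connected_iff_adj_rel)
  then obtain c where "(a, c) \<in> adj_rel N TE"
    using ab(3) by (cases rule: converse_rtranclE) auto
  then have "{a, c} \<in> TE"
    by (simp add: adj_rel_def)
  then obtain x y where xy: "{x, y} \<in> TE"
    and least: "\<And>x' y'. {x', y'} \<in> TE \<Longrightarrow> card (tree_side N TE x y) \<le> card (tree_side N TE x' y')"
    using ex_has_least_nat[of "\<lambda>(x, y). {x, y} \<in> TE" "(a, c)" "\<lambda>(x, y). card (tree_side N TE x y)"]
    by auto
  have "w = x" if yw: "{y, w} \<in> TE" for w
  proof (rule ccontr)
    assume "w \<noteq> x"
    then have "card (tree_side N TE y w) < card (tree_side N TE x y)"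
      using tree_side_psubset[OF tree xy yw] finite_tree_side[OF tree] simple_graph_edgeD[OF sg xy]
      by (meson psubset_card_mono)
    then show False
      using least[OF yw] by simp
  qed
  moreover have "{y, x} \<in> TE"
    using xy by (simp add: insert_commute)
  ultimately show ?thesis
    unfolding leaf_edge_def by blast
qed

lemma tree_decomposition_remove_leaf:
  assumes td: "tree_decomposition V E N TE B" and leaf: "leaf_edge TE t t'" and sub: "B t \<subseteq> B t'"
  shows "tree_decomposition V E (N - {t}) (TE - {{t, t'}}) B"
proof -
  have tree: "is_tree N TE" and bags: "\<forall>s\<in>N. B s \<subseteq> V"
    and verts: "\<forall>v\<in>V. \<exists>s\<in>N. v \<in> B s" and edges: "\<forall>e\<in>E. \<exists>s\<in>N. e \<subseteq> B s"
    and subtrees: "\<forall>v\<in>V. graph_connected {s \<in> N. v \<in> B s} {e \<in> TE. \<forall>s\<in>e. v \<in> B s}"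
    using td by (simp_all add: tree_decomposition_def)
  have t: "t' \<in> N" "t \<noteq> t'"
    using leaf simple_graph_edgeD[of N TE t t'] tree by (auto simp: is_tree_def leaf_edge_def)
  have cover: "\<exists>s\<in>N - {t}. X \<subseteq> B s" if "s \<in> N" "X \<subseteq> B s" for s X
    using that t sub by (cases "s = t") auto
  have "\<exists>s\<in>N - {t}. v \<in> B s" if "v \<in> V" for v
    using verts that cover[of _ "{v}"] by blast
  moreover have "\<exists>s\<in>N - {t}. e \<subseteq> B s" if "e \<in> E" for e
    using edges that cover by blast
  moreover have "graph_connected {s \<in> N - {t}. v \<in> B s} {e \<in> TE - {{t, t'}}. \<forall>s\<in>e. v \<in> B s}"
    if "v \<in> V" for v
  proof -
    have "graph_connected ({s \<in> N. v \<in> B s} - {t}) ({e \<in> TE. \<forall>s\<in>e. v \<in> B s} - {{t, t'}})"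
      using subtrees that leaf t(2) by (intro graph_connected_remove_leaf) (auto simp: leaf_edge_def)
    moreover have "{s \<in> N. v \<in> B s} - {t} = {s \<in> N - {t}. v \<in> B s}"
      "{e \<in> TE. \<forall>s\<in>e. v \<in> B s} - {{t, t'}} = {e \<in> TE - {{t, t'}}. \<forall>s\<in>e. v \<in> B s}"
      by blast+
    ultimately show ?thesis
      by simp
  qed
  ultimately show ?thesis
    using is_tree_remove_leaf[OF tree leaf] bags unfolding tree_decomposition_def by blast
qed

lemma tree_decomposition_leaf_only_bag:
  assumes td: "tree_decomposition V E N TE B" and leaf: "leaf_edge TE t t'" and "t \<in> N"
    and v: "v \<in> B t" "v \<notin> B t'" and s: "s \<in> N" "v \<in> B s"
  shows "s = t"
proof -
  let ?R = "adj_rel {s \<in> N. v \<in> B s} {e \<in> TE. \<forall>s\<in>e. v \<in> B s}"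
  have "v \<in> V"
    using td \<open>t \<in> N\<close> v(1) unfolding tree_decomposition_def by blast
  then have "graph_connected {s \<in> N. v \<in> B s} {e \<in> TE. \<forall>s\<in>e. v \<in> B s}"
    using td unfolding tree_decomposition_def by blast
  then have "(t, s) \<in> ?R\<^sup>*"
    using \<open>t \<in> N\<close> v(1) s unfolding graph_connected_iff_adj_rel by blast
  then show "s = t"
  proof (cases rule: converse_rtranclE)
    case (step w)
    then have "{t, w} \<in> TE" "v \<in> B w"
      by (auto simp: adj_rel_def)
    then show ?thesis
      using leaf v(2) by (auto simp: leaf_edge_def)
  qed simp
qed

lemma tree_decomposition_degree_less_card_bag:
  assumes td: "tree_decomposition V E N TE B" and sg: "simple_graph V E" and "t \<in> N"
    and v: "v \<in> B t" and only_t: "\<forall>s\<in>N. v \<in> B s \<longrightarrow> s = t"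
  shows "card {u \<in> V. {u, v} \<in> E} < card (B t)"
proof -
  have "B t \<subseteq> V"
    using td \<open>t \<in> N\<close> unfolding tree_decomposition_def by blast
  moreover have "finite V"
    using sg by (simp add: simple_graph_def)
  ultimately have fin: "finite (B t)"
    by (rule finite_subset)
  have "u \<in> B t - {v}" if "{u, v} \<in> E" for u
  proof -
    obtain s where "s \<in> N" "{u, v} \<subseteq> B s"
      using td \<open>{u, v} \<in> E\<close> unfolding tree_decomposition_def by blast
    moreover from this have "s = t"
      using only_t by blast
    moreover have "u \<noteq> v"
      using simple_graph_edgeD[OF sg \<open>{u, v} \<in> E\<close>] by blast
    ultimately show ?thesis
      by blast
  qed
  then have "card {u \<in> V. {u, v} \<in> E} \<le> card (B t - {v})"
    using fin by (intro card_mono) auto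
  also have "\<dots> < card (B t)"
    using fin v by (rule card_Diff1_less)
  finally show ?thesis .
qed

lemma tree_decomposition_low_degree_vertex:
  assumes "tree_decomposition V E N TE B" "simple_graph V E" "V \<noteq> {}"
    "\<forall>t\<in>N. card (B t) \<le> k + 1"
  shows "\<exists>v\<in>V. card {u \<in> V. {u, v} \<in> E} \<le> k"
  using assms
proof (induction "card N" arbitrary: N TE rule: less_induct)
  case less
  note td = less.prems(1)
  have tree: "is_tree N TE" and bags: "\<forall>t\<in>N. B t \<subseteq> V" "\<forall>v\<in>V. \<exists>t\<in>N. v \<in> B t"
    using td by (simp_all add: tree_decomposition_def)
  have fin: "finite N" and "N \<noteq> {}"
    using tree by (simp_all add: is_tree_def simple_graph_def)
  have single_bag: "\<exists>v\<in>V. card {u \<in> V. {u, v} \<in> E} \<le> k"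
    if t: "t \<in> N" "v \<in> B t" "\<forall>s\<in>N. v \<in> B s \<longrightarrow> s = t" for t v
  proof -
    have "card {u \<in> V. {u, v} \<in> E} < card (B t)"
      by (rule tree_decomposition_degree_less_card_bag[OF td less.prems(2) t])
    moreover have "card (B t) \<le> k + 1"
      using less.prems(4) t by blast
    moreover have "v \<in> V"
      using bags t by blast
    ultimately show ?thesis
      by (intro bexI[of _ v]) simp_all
  qed
  show ?case
  proof (cases "2 \<le> card N")
    case False
    moreover have "0 < card N"
      using fin \<open>N \<noteq> {}\<close> by (simp add: card_gt_0_iff)
    ultimately have "card N = 1"
      by linarith
    then obtain t where N: "N = {t}"
      by (rule card_1_singletonE)
    obtain v where "v \<in> V"
      using less.prems(3) by blast
    then have "v \<in> B t"
      using bags N by blast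
    then show ?thesis
      using single_bag[of t v] N by blast
  next
    case True
    then obtain t t' where leaf: "leaf_edge TE t t'"
      using tree_has_leaf_edge[OF tree] by blast
    have "t \<in> N"
      using leaf tree simple_graph_edgeD[of N TE t t'] by (auto simp: is_tree_def leaf_edge_def)
    show ?thesis
    proof (cases "B t \<subseteq> B t'")
      case True
      have "card (N - {t}) < card N"
        using fin \<open>t \<in> N\<close> by (rule card_Diff1_less)
      moreover have "\<forall>s\<in>N - {t}. card (B s) \<le> k + 1"
        using less.prems(4) by blast
      ultimately show ?thesis
        using less.hyps tree_decomposition_remove_leaf[OF td leaf True] less.prems(2,3) by blast
    next
      case False
      then obtain v where "v \<in> B t" "v \<notin> B t'"
        by blast
      then show ?thesis
        using single_bag[OF \<open>t \<in> N\<close>] tree_decomposition_leaf_only_bag[OF td leaf \<open>t \<in> N\<close>] by blast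
    qed
  qed
qed

lemma tree_decomposition_restrict:
  assumes td: "tree_decomposition V E N TE B" and "T \<subseteq> V"
  shows "tree_decomposition T {e \<in> E. e \<subseteq> T} N TE (\<lambda>t. B t \<inter> T)"
proof -
  have tree: "is_tree N TE" and verts: "\<forall>v\<in>V. \<exists>t\<in>N. v \<in> B t"
    and edges: "\<forall>e\<in>E. \<exists>t\<in>N. e \<subseteq> B t"
    and subtrees: "\<forall>v\<in>V. graph_connected {t \<in> N. v \<in> B t} {e \<in> TE. \<forall>t\<in>e. v \<in> B t}"
    using td by (simp_all add: tree_decomposition_def)
  have "{t \<in> N. v \<in> B t \<inter> T} = {t \<in> N. v \<in> B t}"
    "{e \<in> TE. \<forall>t\<in>e. v \<in> B t \<inter> T} = {e \<in> TE. \<forall>t\<in>e. v \<in> B t}" if "v \<in> T" for v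
    using that by blast+
  then have "\<forall>v\<in>T. graph_connected {t \<in> N. v \<in> B t \<inter> T} {e \<in> TE. \<forall>t\<in>e. v \<in> B t \<inter> T}"
    using subtrees \<open>T \<subseteq> V\<close> by auto
  moreover have "\<forall>v\<in>T. \<exists>t\<in>N. v \<in> B t \<inter> T"
    using verts \<open>T \<subseteq> V\<close> by blast
  moreover have "\<exists>t\<in>N. e \<subseteq> B t \<inter> T" if "e \<in> E" "e \<subseteq> T" for e
  proof -
    obtain t where "t \<in> N" "e \<subseteq> B t"
      using edges \<open>e \<in> E\<close> by blast
    then show ?thesis
      using \<open>e \<subseteq> T\<close> by blast
  qed
  ultimately show ?thesis
    using tree by (simp add: tree_decomposition_def)
qed

lemma treewidth_attained:
  assumes "simple_graph V E"
  shows "\<exists>N TE B. tree_decomposition V E N TE B \<and> decomposition_width N B = treewidth V E"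
proof -
  have "is_tree {0} {}"
    by (simp add: is_tree_def simple_graph_def graph_connected_def)
  moreover have "e \<subseteq> V" if "e \<in> E" for e
    using assms that unfolding simple_graph_def by blast
  ultimately have "tree_decomposition V E {0} {} (\<lambda>_. V)"
    by (simp add: tree_decomposition_def graph_connected_def)
  then have "\<exists>N TE B'. tree_decomposition V E N TE B' \<and>
      decomposition_width {0} (\<lambda>_. V) = decomposition_width N B'"
    by blast
  then have "\<exists>N TE B'. tree_decomposition V E N TE B' \<and> treewidth V E = decomposition_width N B'"
    unfolding treewidth_def by (rule LeastI)
  then show ?thesis
    by (elim exE conjE) (intro exI conjI, assumption, simp)
qed

lemma card_bag_le_width:
  assumes "tree_decomposition V E N TE B" "t \<in> N"
  shows "card (B t) \<le> decomposition_width N B + 1"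
proof -
  have "finite N"
    using assms(1) by (simp add: tree_decomposition_def is_tree_def simple_graph_def)
  then have "card (B t) \<le> Max (card ` B ` N)"
    using assms(2) by simp
  then show ?thesis
    by (simp add: decomposition_width_def)
qed

lemma simple_graph_induced:
  assumes "simple_graph V E" "T \<subseteq> V"
  shows "simple_graph T {e \<in> E. e \<subseteq> T}"
  unfolding simple_graph_def
proof (intro conjI subsetI)
  show "finite T"
    using assms finite_subset by (auto simp: simple_graph_def)
  fix e assume e: "e \<in> {e \<in> E. e \<subseteq> T}"
  then obtain a b where "e = {a, b}" "a \<noteq> b"
    using assms(1) unfolding simple_graph_def by blast
  then show "e \<in> {{a, b} |a b. a \<in> T \<and> b \<in> T \<and> a \<noteq> b}"
    using e by blast
qed

definition degenerate :: "nat \<Rightarrow> 'a set \<Rightarrow> 'a set set \<Rightarrow> bool" where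
  "degenerate k V E \<longleftrightarrow> (\<forall>T\<subseteq>V. T \<noteq> {} \<longrightarrow> (\<exists>v\<in>T. card {u \<in> T. {u, v} \<in> E} \<le> k))"

lemma degenerate_treewidth:
  assumes sg: "simple_graph V E"
  shows "degenerate (treewidth V E) V E"
  unfolding degenerate_def
proof (intro allI impI)
  fix T assume T: "T \<subseteq> V" "T \<noteq> {}"
  obtain N TE B where td: "tree_decomposition V E N TE B"
    and width: "decomposition_width N B = treewidth V E"
    using treewidth_attained[OF sg] by blast
  have "card (B t \<inter> T) \<le> treewidth V E + 1" if "t \<in> N" for t
  proof -
    have "B t \<subseteq> V"
      using td that unfolding tree_decomposition_def by blast
    then have "finite (B t)"
      using sg finite_subset by (auto simp: simple_graph_def)
    then have "card (B t \<inter> T) \<le> card (B t)"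
      by (simp add: card_mono)
    then show ?thesis
      using card_bag_le_width[OF td that] width by simp
  qed
  then obtain v where "v \<in> T" "card {u \<in> T. {u, v} \<in> {e \<in> E. e \<subseteq> T}} \<le> treewidth V E"
    using tree_decomposition_low_degree_vertex[OF tree_decomposition_restrict[OF td T(1)]
        simple_graph_induced[OF sg T(1)] T(2)]
    by blast
  moreover have "{u \<in> T. {u, v} \<in> {e \<in> E. e \<subseteq> T}} = {u \<in> T. {u, v} \<in> E}"
    using \<open>v \<in> T\<close> by blast
  ultimately show "\<exists>v\<in>T. card {u \<in> T. {u, v} \<in> E} \<le> treewidth V E"
    by auto
qed

definition conflict_free :: "'a set \<Rightarrow> ('a \<Rightarrow> nat) \<Rightarrow> 'a set set \<Rightarrow> ('a \<Rightarrow> nat) \<Rightarrow> bool" where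
  "conflict_free S pt E C \<longleftrightarrow>
     (\<forall>i\<in>S. \<forall>j\<in>S. {i, j} \<in> E \<longrightarrow> {C i - pt i..<C i} \<inter> {C j - pt j..<C j} = {})"

definition left_justified :: "'a set \<Rightarrow> ('a \<Rightarrow> nat) \<Rightarrow> 'a set set \<Rightarrow> ('a \<Rightarrow> nat) \<Rightarrow> bool" where
  "left_justified S pt E C \<longleftrightarrow>
     (\<forall>j\<in>S. \<forall>c<C j. c < pt j \<or>
        (\<exists>i\<in>S. {i, j} \<in> E \<and> {c - pt j..<c} \<inter> {C i - pt i..<C i} \<noteq> {}))"

text \<open>An interval \<open>[a, b)\<close> forbids fewer than \<open>(b - a) + q\<close> completion times \<open>c\<close> of a job of length
  \<open>q\<close>, namely those in \<open>(a, b + q)\<close>; so some \<open>c \<le> q + 2 p |I|\<close> is free.\<close>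
lemma free_slot_exists:
  assumes "finite I" "\<forall>i\<in>I. b i - a i \<le> p" "q \<le> p"
  shows "\<exists>c. q \<le> c \<and> c \<le> q + 2 * p * card I \<and> (\<forall>i\<in>I. {c - q..<c} \<inter> {a i..<b i} = {})"
proof -
  let ?blocked = "\<Union>i\<in>I. {a i<..<b i + q}"
  have "card ?blocked \<le> (\<Sum>i\<in>I. card {a i<..<b i + q})"
    using assms(1) by (rule card_UN_le)
  also have "\<dots> \<le> (\<Sum>i\<in>I. 2 * p)"
    using assms(2,3) by (intro sum_mono) auto
  finally have "card ?blocked < card {q..q + 2 * p * card I}"
    by (simp add: mult.commute)
  then have "\<not> {q..q + 2 * p * card I} \<subseteq> ?blocked"
    using card_mono[of ?blocked] assms(1) by (meson finite_UN_I finite_greaterThanLessThan not_le)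
  then obtain c where c: "c \<in> {q..q + 2 * p * card I}" "c \<notin> ?blocked"
    by blast
  have "{c - q..<c} \<inter> {a i..<b i} = {}" if "i \<in> I" for i
  proof (rule ccontr)
    assume "{c - q..<c} \<inter> {a i..<b i} \<noteq> {}"
    then have "c \<in> {a i<..<b i + q}"
      using c(1) by auto
    then show False
      using c(2) that by blast
  qed
  then show ?thesis
    using c(1) by auto
qed

lemma schedule_insert_job:
  assumes "finite S" "v \<notin> S" "\<forall>j\<in>insert v S. pt j \<le> p" "\<forall>u. {u} \<notin> E"
    and deg: "card {u \<in> S. {u, v} \<in> E} \<le> k"
    and C0: "\<forall>j\<in>S. pt j \<le> C0 j \<and> C0 j \<le> (2 * k + 1) * p"
      "conflict_free S pt E C0" "left_justified S pt E C0"
  shows "\<exists>C. (\<forall>j\<in>insert v S. pt j \<le> C j \<and> C j \<le> (2 * k + 1) * p) \<and>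
    conflict_free (insert v S) pt E C \<and> left_justified (insert v S) pt E C"
proof -
  define Nb where "Nb = {u \<in> S. {u, v} \<in> E}"
  define fits where "fits c \<longleftrightarrow> pt v \<le> c \<and> (\<forall>i\<in>Nb. {c - pt v..<c} \<inter> {C0 i - pt i..<C0 i} = {})"
    for c
  have "finite Nb" "pt v \<le> p" "\<forall>i\<in>Nb. C0 i - (C0 i - pt i) \<le> p"
    using assms(1,3) C0(1) by (auto simp: Nb_def)
  then obtain c0 where "fits c0" "c0 \<le> pt v + 2 * p * card Nb"
    using free_slot_exists[where I = Nb and b = C0 and a = "\<lambda>i. C0 i - pt i" and q = "pt v" and p = p]
    unfolding fits_def by blast
  define cv where "cv = (LEAST c. fits c)"
  have "fits cv"
    unfolding cv_def using \<open>fits c0\<close> by (rule LeastI)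
  have "cv \<le> c0"
    unfolding cv_def using \<open>fits c0\<close> by (rule Least_le)
  also have "\<dots> \<le> p + 2 * p * k"
    using \<open>c0 \<le> pt v + 2 * p * card Nb\<close> \<open>pt v \<le> p\<close> deg mult_le_mono2[of "card Nb" k "2 * p"]
    unfolding Nb_def by linarith
  also have "\<dots> = (2 * k + 1) * p"
    by simp
  finally have cv_le: "cv \<le> (2 * k + 1) * p" .
  define C where "C = C0(v := cv)"
  have C_other: "C j = C0 j" if "j \<in> S" for j
    using that assms(2) by (auto simp: C_def)
  have "\<forall>j\<in>insert v S. pt j \<le> C j \<and> C j \<le> (2 * k + 1) * p"
    using C0(1) C_other \<open>fits cv\<close> cv_le by (simp add: C_def fits_def)
  moreover have "conflict_free (insert v S) pt E C"
    unfolding conflict_free_def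
  proof (intro ballI impI)
    fix i j assume ij: "i \<in> insert v S" "j \<in> insert v S" "{i, j} \<in> E"
    consider "i = v" "j \<in> S" | "j = v" "i \<in> S" | "i \<in> S" "j \<in> S"
      using ij assms(4) by fastforce
    then show "{C i - pt i..<C i} \<inter> {C j - pt j..<C j} = {}"
    proof cases
      case 1
      then show ?thesis
        using \<open>fits cv\<close> ij(3) C_other by (auto simp: fits_def Nb_def C_def insert_commute)
    next
      case 2
      then show ?thesis
        using \<open>fits cv\<close> ij(3) C_other by (auto simp: fits_def Nb_def C_def)
    next
      case 3
      then show ?thesis
        using C0(2) ij(3) C_other by (simp add: conflict_free_def)
    qed
  qed
  moreover have "left_justified (insert v S) pt E C"
    unfolding left_justified_def
  proof (intro ballI allI impI)
    fix j c assume j: "j \<in> insert v S" and "c < C j"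
    show "c < pt j \<or> (\<exists>i\<in>insert v S. {i, j} \<in> E \<and> {c - pt j..<c} \<inter> {C i - pt i..<C i} \<noteq> {})"
    proof (cases "j = v")
      case True
      then have "\<not> fits c"
        using \<open>c < C j\<close> not_less_Least[of c fits] by (simp add: C_def cv_def)
      then show ?thesis
        using True C_other by (auto simp: fits_def Nb_def)
    next
      case False
      then have "j \<in> S" "c < C0 j"
        using j \<open>c < C j\<close> C_other by auto
      then show ?thesis
        using C0(3) C_other unfolding left_justified_def by fastforce
    qed
  qed
  ultimately show ?thesis
    by blast
qed

lemma greedy_schedule_exists:
  assumes "finite S" "degenerate k S E" "\<forall>j\<in>S. pt j \<le> p" "\<forall>u. {u} \<notin> E"
  shows "\<exists>C. (\<forall>j\<in>S. pt j \<le> C j \<and> C j \<le> (2 * k + 1) * p) \<and>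
    conflict_free S pt E C \<and> left_justified S pt E C"
  using assms(1)
proof (induction rule: finite_remove_induct)
  case empty
  show ?case
    by (simp add: conflict_free_def left_justified_def)
next
  case (remove A)
  obtain v where "v \<in> A" and deg: "card {u \<in> A. {u, v} \<in> E} \<le> k"
    using assms(2) remove.hyps(2,3) unfolding degenerate_def by blast
  have "card {u \<in> A - {v}. {u, v} \<in> E} \<le> card {u \<in> A. {u, v} \<in> E}"
    using remove.hyps(1) by (intro card_mono) auto
  with deg have deg': "card {u \<in> A - {v}. {u, v} \<in> E} \<le> k"
    by linarith
  obtain C0 where "\<forall>j\<in>A - {v}. pt j \<le> C0 j \<and> C0 j \<le> (2 * k + 1) * p"
    "conflict_free (A - {v}) pt E C0" "left_justified (A - {v}) pt E C0"
    using remove.IH[OF \<open>v \<in> A\<close>] by blast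
  moreover have "\<forall>j\<in>insert v (A - {v}). pt j \<le> p"
    using assms(3) remove.hyps(3) \<open>v \<in> A\<close> by blast
  ultimately have ex: "\<exists>C. (\<forall>j\<in>insert v (A - {v}). pt j \<le> C j \<and> C j \<le> (2 * k + 1) * p) \<and>
    conflict_free (insert v (A - {v})) pt E C \<and> left_justified (insert v (A - {v})) pt E C"
    using remove.hyps(1) assms(4) deg' by (intro schedule_insert_job) auto
  then show ?case
    unfolding insert_Diff[OF \<open>v \<in> A\<close>] .
qed

lemma minimal_schedule_if_left_justified:
  assumes sg: "simple_graph {1..n} E" and "\<forall>j\<in>{1..n}. pt j \<le> C j"
    and cf: "conflict_free {1..n} pt E C" and lj: "left_justified {1..n} pt E C"
  shows "minimal_schedule n pt E C"
proof -
  have edge: "i \<in> {1..n} \<and> j \<in> {1..n} \<and> i \<noteq> j" if "{i, j} \<in> E" for i j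
    using simple_graph_edgeD[OF sg that] .
  have "feasible_schedule n pt E C"
    using assms(2) cf edge unfolding feasible_schedule_def conflict_free_def by blast
  moreover have "\<not> feasible_schedule n pt E (C(j := C j - d))"
    if j: "j \<in> {1..n}" and d: "0 < d" "d \<le> C j" for j d
  proof
    assume feas: "feasible_schedule n pt E (C(j := C j - d))"
    have "C j - d < C j"
      using d by simp
    then consider "C j - d < pt j"
      | i where "i \<in> {1..n}" "{i, j} \<in> E" "{C j - d - pt j..<C j - d} \<inter> {C i - pt i..<C i} \<noteq> {}"
      using lj j unfolding left_justified_def by blast
    then show False
    proof cases
      case 1
      then show False
        using feas j unfolding feasible_schedule_def by (metis fun_upd_same not_le)
    next
      case 2
      then have "i \<noteq> j"
        using edge by blast
      then show False
        using feas 2 unfolding feasible_schedule_def by (fastforce simp: Int_commute)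
    qed
  qed
  ultimately show ?thesis
    unfolding minimal_schedule_def by blast
qed

theorem lemma6:
  "\<exists>c::real. \<forall>n::nat. \<forall>p::nat. \<forall>pt::nat \<Rightarrow> nat. \<forall>E::nat set set.
     2 \<le> n \<longrightarrow> simple_graph {1..n} E \<longrightarrow> (\<forall>j\<in>{1..n}. 1 \<le> pt j \<and> pt j \<le> p) \<longrightarrow>
     (\<exists>C. minimal_schedule n pt E C \<and>
          real (makespan n C) \<le> c * real (treewidth {1..n} E + 1) * real p * log 2 (real n))"
proof (intro exI[of _ 2] allI impI)
  fix n p :: nat and pt :: "nat \<Rightarrow> nat" and E :: "nat set set"
  assume n: "2 \<le> n" and sg: "simple_graph {1..n} E" and pt: "\<forall>j\<in>{1..n}. 1 \<le> pt j \<and> pt j \<le> p"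
  let ?k = "treewidth {1..n} E"
  obtain C where C: "\<forall>j\<in>{1..n}. pt j \<le> C j \<and> C j \<le> (2 * ?k + 1) * p"
    and "conflict_free {1..n} pt E C" "left_justified {1..n} pt E C"
    using greedy_schedule_exists[OF finite_atLeastAtMost degenerate_treewidth[OF sg]] pt
      simple_graph_no_loop[OF sg] by blast
  then have "minimal_schedule n pt E C"
    using sg by (blast intro: minimal_schedule_if_left_justified)
  have "makespan n C \<le> (2 * ?k + 1) * p"
    unfolding makespan_def using C n by (subst Max_le_iff) auto
  then have "real (makespan n C) \<le> real ((2 * ?k + 1) * p)"
    by (simp only: of_nat_le_iff)
  also have "\<dots> \<le> 2 * real (?k + 1) * real p * 1"
    by (simp add: algebra_simps)
  also have "\<dots> \<le> 2 * real (?k + 1) * real p * log 2 (real n)"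
    using n by (intro mult_left_mono) auto
  finally show "\<exists>C. minimal_schedule n pt E C \<and>
      real (makespan n C) \<le> 2 * real (?k + 1) * real p * log 2 (real n)"
    using \<open>minimal_schedule n pt E C\<close> by blast
qed

end
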